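(* Let $\Gamma$ be a Coxeter graph with Coxeter matrix $M=(m_{s,t})_{s,t\in S}$. Let $u,v\in W[\Gamma]$ and $s,t\in S$. If $u(\alpha_s)=v(\alpha_t)$ in $V$, then $u\cdot\sigma_s=v\cdot\sigma_t$ in $KVA[\Gamma]$ and $u\cdot(\tau_s\sigma_s)=v\cdot(\tau_t\sigma_t)$ in $PVA[\Gamma]$.
   Context: A Coxeter matrix on a countable set $S$ is a symmetric matrix $M=(m_{s,t})_{s,t\in S}$ with entries in $\mathbb{N}\cup\{\infty\}$ such that $m_{s,s}=1$ for all $s$ and $m_{s,t}=m_{t,s}\ge 2$ for $s\neq t$; it is encoded by a Coxeter graph $\Gamma$ with vertex set $S$ ($\Gamma$ is called finite if $S$ is finite). For letters $a,b$ and an integer $m\ge 2$, $\Pi_L(a,b,m)$ denotes the alternating word $aba\cdots$ of length $m$ beginning with $a$, and $\Pi_R(b,a,m)$ denotes the alternating word $\cdots aba$ of length $m$ ending with $a$; the same notation denotes the elements these words represent in a group. The Artin group $A[\Gamma]$ is given by the presentation $\langle S\mid \Pi_R(t,s,m_{s,t})=\Pi_R(s,t,m_{s,t})\text{ for } s\neq t,\ m_{s,t}\neq\infty\rangle$, and the Coxeter group $W[\Gamma]$ is the quotient of $A[\Gamma]$ by the relations $s^2=1$, $s\in S$. The virtual Artin group $VA[\Gamma]$ is the group generated by two sets $\{\sigma_s\mid s\in S\}$ and $\{\tau_s\mid s\in S\}$ in bijection with $S$, subject to the following relations, for all $s,t\in S$ with $s\neq t$ and $m_{s,t}\neq\infty$: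 (v1) $\Pi_R(\sigma_t,\sigma_s,m_{s,t})=\Pi_R(\sigma_s,\sigma_t,m_{s,t})$; (v2) $\Pi_R(\tau_t,\tau_s,m_{s,t})=\Pi_R(\tau_s,\tau_t,m_{s,t})$, together with $\tau_s^2=1$ for all $s\in S$; (v3) $\Pi_R(\tau_s,\tau_t,m_{s,t}-1)\,\sigma_s=\sigma_r\,\Pi_R(\tau_s,\tau_t,m_{s,t}-1)$, where $r=s$ if $m_{s,t}$ is even and $r=t$ if $m_{s,t}$ is odd. We have homomorphisms $\iota_A:A[\Gamma]\to VA[\Gamma]$, $s\mapsto\sigma_s$; $\iota_W:W[\Gamma]\to VA[\Gamma]$, $s\mapsto\tau_s$; $\pi_K:VA[\Gamma]\to W[\Gamma]$, $\sigma_s\mapsto 1$, $\tau_s\mapsto s$; and $\pi_P:VA[\Gamma]\to W[\Gamma]$, $\sigma_s\mapsto s$, $\tau_s\mapsto s$. Set $KVA[\Gamma]=\ker\pi_K$ and $PVA[\Gamma]=\ker\pi_P$. Let $V$ be the real vector space with basis $\{\alpha_s\mid s\in S\}$ (simple roots), with the symmetric bilinear form $\langle\alpha_s,\alpha_t\rangle=-2\cos(\pi/m_{s,t})$ if $m_{s,t}\neq\infty$ and $=-2$ if $m_{s,t}=\infty$. $W[\Gamma]$ acts faithfully on $V$ by $s(v)=v-\langle v,\alpha_s\rangle\alpha_s$. For $w\in W[\Gamma]$ and $g$ in $KVA[\Gamma]$ or $PVA[\Gamma]$ (normal subgroups of $VA[\Gamma]$), write $w\cdot g=\iota_W(w)\,g\,\iota_W(w)^{-1}$.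 Note $\sigma_s\in KVA[\Gamma]$ and $\tau_s\sigma_s\in PVA[\Gamma]$. *)

theory Defs
  imports Complex_Main "HOL-Library.Extended_Nat" "HOL-Library.Countable"
begin

text \<open>The index set S is the (countable) type 'a itself. Entries lie in enat, infinity = \<infinity>.\<close>

definition coxeter_matrix :: "('a \<Rightarrow> 'a \<Rightarrow> enat) \<Rightarrow> bool" where
  "coxeter_matrix M \<longleftrightarrow> (\<forall>s. M s s = 1) \<and>
     (\<forall>s t. s \<noteq> t \<longrightarrow> M s t = M t s \<and> M s t \<ge> 2)"

text \<open>A letter is a generator together with a sign (True = the generator, False = its inverse).\<close>
type_synonym 'g word = "('g \<times> bool) list"

definition winv :: "'g word \<Rightarrow> 'g word" where
  "winv w = rev (map (\<lambda>(g, b). (g, \<not> b)) w)"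

inductive pres_eq :: "('g word \<times> 'g word) set \<Rightarrow> 'g word \<Rightarrow> 'g word \<Rightarrow> bool"
  for R where
  pres_refl: "pres_eq R w w"
| pres_sym: "pres_eq R w w' \<Longrightarrow> pres_eq R w' w"
| pres_trans: "pres_eq R w w' \<Longrightarrow> pres_eq R w' w'' \<Longrightarrow> pres_eq R w w''"
| pres_rel: "(l, r) \<in> R \<Longrightarrow> pres_eq R (p @ l @ q) (p @ r @ q)"
| pres_cancel: "pres_eq R (p @ [(x, b), (x, \<not> b)] @ q) (p @ q)"

text \<open>Alternating words: alt_R b a m is the word ... a b a of length m ending with a.\<close>
definition alt_R :: "'x \<Rightarrow> 'x \<Rightarrow> nat \<Rightarrow> 'x list" where
  "alt_R b a m = rev (map (\<lambda>i. if even i then a else b) [0..<m])"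

datatype 'a vgen = Sig 'a | Tau 'a

definition pos :: "'g list \<Rightarrow> 'g word" where
  "pos xs = map (\<lambda>x. (x, True)) xs"

definition va_rels :: "('a \<Rightarrow> 'a \<Rightarrow> enat) \<Rightarrow> ('a vgen word \<times> 'a vgen word) set" where
  "va_rels M =
     {(pos (alt_R (Sig t) (Sig s) k), pos (alt_R (Sig s) (Sig t) k)) | s t k. s \<noteq> t \<and> M s t = enat k}
   \<union> {(pos (alt_R (Tau t) (Tau s) k), pos (alt_R (Tau s) (Tau t) k)) | s t k. s \<noteq> t \<and> M s t = enat k}
   \<union> {(pos [Tau s, Tau s], []) | s. True}
   \<union> {(pos (alt_R (Tau s) (Tau t) (k - 1) @ [Sig s]),
        pos (Sig (if even k then s else t) # alt_R (Tau s) (Tau t) (k - 1))) | s t k.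
        s \<noteq> t \<and> M s t = enat k}"

definition va_eq :: "('a \<Rightarrow> 'a \<Rightarrow> enat) \<Rightarrow> 'a vgen word \<Rightarrow> 'a vgen word \<Rightarrow> bool" where
  "va_eq M = pres_eq (va_rels M)"

text \<open>iota_W on a word u = s1...sk of W (every element of W is such a product):\<close>
definition iotaW :: "'a list \<Rightarrow> 'a vgen word" where
  "iotaW u = pos (map Tau u)"

text \<open>w . g = iota_W(w) g iota_W(w)^{-1}\<close>
definition wconj :: "'a list \<Rightarrow> 'a vgen word \<Rightarrow> 'a vgen word" where
  "wconj u g = iotaW u @ g @ winv (iotaW u)"

text \<open>V = finitely supported functions 'a \<Rightarrow> real; simple root alpha_s = indicator of s.\<close>
definition root :: "'a \<Rightarrow> 'a \<Rightarrow> real" where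
  "root s = (\<lambda>x. if x = s then 1 else 0)"

definition bform_gen :: "('a \<Rightarrow> 'a \<Rightarrow> enat) \<Rightarrow> 'a \<Rightarrow> 'a \<Rightarrow> real" where
  "bform_gen M s t = (case M s t of enat k \<Rightarrow> - 2 * cos (pi / real k) | \<infinity> \<Rightarrow> - 2)"

definition bform :: "('a \<Rightarrow> 'a \<Rightarrow> enat) \<Rightarrow> ('a \<Rightarrow> real) \<Rightarrow> ('a \<Rightarrow> real) \<Rightarrow> real" where
  "bform M v w = (\<Sum>s\<in>{s. v s \<noteq> 0}. \<Sum>t\<in>{t. w t \<noteq> 0}. v s * w t * bform_gen M s t)"

definition refl_act :: "('a \<Rightarrow> 'a \<Rightarrow> enat) \<Rightarrow> 'a \<Rightarrow> ('a \<Rightarrow> real) \<Rightarrow> ('a \<Rightarrow> real)" where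
  "refl_act M s v = (\<lambda>x. v x - bform M v (root s) * root s x)"

definition word_act :: "('a \<Rightarrow> 'a \<Rightarrow> enat) \<Rightarrow> 'a list \<Rightarrow> ('a \<Rightarrow> real) \<Rightarrow> ('a \<Rightarrow> real)" where
  "word_act M u v = foldr (refl_act M) u v"

end

theory Submission
  imports Defs
begin

(* Put w = v\<inverse> u, so that w(\<alpha>\<^sub>s) = \<alpha>\<^sub>t; it suffices to show that w conjugates \<sigma>\<^sub>s and \<tau>\<^sub>s to
   \<sigma>\<^sub>t and \<tau>\<^sub>t, and this is proved by induction on the length of w.  Let r be the last letter
   of a reduced word for w; r \<noteq> s, since otherwise w(\<alpha>\<^sub>s) would be a negative root.  Factor
   w = x y with y in the parabolic subgroup W\<^bsub>{s,r}\<^esub>, lengths adding up and x as short as possible.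
   Then x is shorter than w and, by positivity of roots (Deodhar's argument, which uses the same
   factorization), x(\<alpha>\<^sub>s) and x(\<alpha>\<^sub>r) have nonnegative coefficients.  As x maps y(\<alpha>\<^sub>s) to \<alpha>\<^sub>t, this
   forces y(\<alpha>\<^sub>s) to be a positive multiple of \<alpha>\<^sub>s or \<alpha>\<^sub>r, and induction applies to x.  In rank two the
   action of an alternating word on \<alpha>\<^sub>s is given by Chebyshev polynomials of cos(\<pi>/m), which shows
   that y can only send \<alpha>\<^sub>s to a simple root \<alpha>\<^sub>c through the word \<Pi>(s,r,m-1); relations (v2) and
   (v3) say exactly that this word conjugates \<tau>\<^sub>s and \<sigma>\<^sub>s to \<tau>\<^sub>c and \<sigma>\<^sub>c. *)

lemma pres_eq_append_cong: "pres_eq R a b \<Longrightarrow> pres_eq R (u @ a @ v) (u @ b @ v)"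
proof (induction arbitrary: u v rule: pres_eq.induct)
  case (pres_rel l r p q)
  from pres_eq.pres_rel[OF pres_rel, of "u @ p" "q @ v"] show ?case by simp
next
  case (pres_cancel p x b q)
  from pres_eq.pres_cancel[of R "u @ p" x b "q @ v"] show ?case by simp
qed (blast intro: pres_eq.pres_refl pres_eq.pres_sym pres_eq.pres_trans)+

lemma pres_eq_append: "pres_eq R a b \<Longrightarrow> pres_eq R c d \<Longrightarrow> pres_eq R (a @ c) (b @ d)"
  using pres_eq_append_cong[of R a b "[]" c] pres_eq_append_cong[of R c d b "[]"]
  by (simp add: pres_eq.pres_trans)

lemma winv_Nil [simp]: "winv [] = []"
  by (simp add: winv_def)

lemma winv_append [simp]: "winv (a @ b) = winv b @ winv a"
  by (simp add: winv_def)

lemma winv_winv [simp]: "winv (winv w) = w"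
  by (induction w) (auto simp: winv_def)

lemma pres_eq_append_winv: "pres_eq R (w @ winv w) []"
proof (induction w)
  case Nil
  show ?case by (simp add: pres_eq.pres_refl)
next
  case (Cons x w)
  obtain g b where x: "x = (g, b)" by (cases x)
  have "pres_eq R ([x] @ (w @ winv w) @ [(g, \<not> b)]) ([x] @ [] @ [(g, \<not> b)])"
    by (rule pres_eq_append_cong[OF Cons])
  moreover have "pres_eq R ([] @ [(g, b), (g, \<not> b)] @ []) []"
    using pres_eq.pres_cancel[of R "[]" g b "[]"] by simp
  moreover have "winv (x # w) = winv w @ [(g, \<not> b)]"
    using x by (simp add: winv_def)
  ultimately show ?case
    using x pres_eq.pres_trans by fastforce
qed

lemma pres_eq_winv_append: "pres_eq R (winv w @ w) []"
  using pres_eq_append_winv[of R "winv w"] by simp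

lemma pres_eq_winv: "pres_eq R a b \<Longrightarrow> pres_eq R (winv a) (winv b)"
proof -
  assume ab: "pres_eq R a b"
  have "pres_eq R (winv a @ [] @ []) (winv a @ (b @ winv b) @ [])"
    by (rule pres_eq_append_cong, rule pres_eq.pres_sym, rule pres_eq_append_winv)
  moreover have "pres_eq R (winv a @ b @ winv b) (winv a @ a @ winv b)"
    by (rule pres_eq_append_cong, rule pres_eq.pres_sym, rule ab)
  moreover have "pres_eq R ([] @ (winv a @ a) @ winv b) ([] @ [] @ winv b)"
    by (intro pres_eq_append_cong pres_eq_winv_append)
  ultimately show ?thesis
    by (auto intro: pres_eq.pres_trans)
qed

definition conj_word :: "'g word \<Rightarrow> 'g word \<Rightarrow> 'g word" where
  "conj_word P g = P @ g @ winv P"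

lemma conj_word_cong:
  "pres_eq R P P' \<Longrightarrow> pres_eq R g g' \<Longrightarrow> pres_eq R (conj_word P g) (conj_word P' g')"
  unfolding conj_word_def by (intro pres_eq_append pres_eq_winv)

lemma conj_word_append: "conj_word (P @ Q) g = conj_word P (conj_word Q g)"
  by (simp add: conj_word_def)

lemma conj_word_eqI: "pres_eq R (P @ g) (g' @ P) \<Longrightarrow> pres_eq R (conj_word P g) g'"
proof -
  assume h: "pres_eq R (P @ g) (g' @ P)"
  have "pres_eq R ((P @ g) @ winv P) ((g' @ P) @ winv P)"
    by (rule pres_eq_append[OF h pres_eq.pres_refl])
  moreover have "pres_eq R (g' @ (P @ winv P) @ []) (g' @ [] @ [])"
    by (intro pres_eq_append_cong pres_eq_append_winv)
  ultimately show ?thesis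
    unfolding conj_word_def by (auto intro: pres_eq.pres_trans)
qed

lemma conj_word_append_distrib: "pres_eq R (conj_word P (g @ h)) (conj_word P g @ conj_word P h)"
proof -
  have "pres_eq R ((P @ g) @ [] @ (h @ winv P)) ((P @ g) @ (winv P @ P) @ (h @ winv P))"
    by (rule pres_eq_append_cong, rule pres_eq.pres_sym, rule pres_eq_winv_append)
  then show ?thesis by (simp add: conj_word_def)
qed

lemma alt_R_0 [simp]: "alt_R b a 0 = []"
  by (simp add: alt_R_def)

lemma alt_R_Suc: "alt_R b a (Suc n) = (if even n then a else b) # alt_R b a n"
  by (simp add: alt_R_def)

lemma alt_R_Suc_snoc: "alt_R b a (Suc n) = alt_R a b n @ [a]"
  by (induction n arbitrary: a b) (auto simp: alt_R_Suc)

lemma alt_R_add: "alt_R b a (i + j) = (if even j then alt_R b a i else alt_R a b i) @ alt_R b a j"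
  by (induction j arbitrary: a b) (auto simp: alt_R_Suc_snoc)

lemma length_alt_R [simp]: "length (alt_R b a n) = n"
  by (simp add: alt_R_def)

lemma set_alt_R: "set (alt_R b a n) \<subseteq> {a, b}"
  by (induction n) (auto simp: alt_R_Suc)

lemma map_alt_R: "map f (alt_R b a n) = alt_R (f b) (f a) n"
  by (induction n) (auto simp: alt_R_Suc)

definition alternating :: "'x list \<Rightarrow> bool" where
  "alternating z \<longleftrightarrow> (\<forall>i. Suc i < length z \<longrightarrow> z ! i \<noteq> z ! Suc i)"

lemma not_alternating_split:
  assumes "\<not> alternating z"
  obtains p x q where "z = p @ [x, x] @ q"
proof -
  obtain i where i: "Suc i < length z" "z ! i = z ! Suc i"
    using assms by (auto simp: alternating_def)
  have "z = take i z @ drop i z" by simp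
  also have "drop i z = z ! i # z ! Suc i # drop (Suc (Suc i)) z"
    using i(1) by (metis Cons_nth_drop_Suc Suc_lessD)
  finally show thesis
    using that i(2) by simp
qed

lemma alternating_Cons: "alternating (x # z) \<Longrightarrow> alternating z"
  unfolding alternating_def by force

lemma alternating_eq_alt_R:
  assumes "alternating z" "set z \<subseteq> {a, b}" "z \<noteq> []" "last z = b"
  shows "z = alt_R a b (length z)"
  using assms
proof (induction z)
  case (Cons x z)
  show ?case
  proof (cases z)
    case Nil
    then show ?thesis using Cons.prems by (simp add: alt_R_Suc)
  next
    case (Cons y z')
    have IH: "z = alt_R a b (length z)"
      using Cons.prems Cons by (intro Cons.IH) (auto dest: alternating_Cons)
    have "x \<noteq> y" "x \<in> {a, b}"
      using Cons.prems(1,2) Cons by (auto simp: alternating_def)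
    moreover have y: "y = (if even (length z') then b else a)"
      using IH Cons by (simp add: alt_R_Suc)
    ultimately have "x = (if even (length z) then b else a)"
      using Cons by (cases "even (length z')") auto
    then show ?thesis
      using IH by (simp add: alt_R_Suc)
  qed
qed simp

inductive cox_eq :: "('a \<Rightarrow> 'a \<Rightarrow> enat) \<Rightarrow> 'a list \<Rightarrow> 'a list \<Rightarrow> bool" for M where
  cox_refl: "cox_eq M w w"
| cox_sym: "cox_eq M w w' \<Longrightarrow> cox_eq M w' w"
| cox_trans: "cox_eq M w w' \<Longrightarrow> cox_eq M w' w'' \<Longrightarrow> cox_eq M w w''"
| cox_braid: "s \<noteq> t \<Longrightarrow> M s t = enat k \<Longrightarrow> cox_eq M (p @ alt_R t s k @ q) (p @ alt_R s t k @ q)"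
| cox_cancel: "cox_eq M (p @ [x, x] @ q) (p @ q)"

lemma cox_eq_append_cong: "cox_eq M a b \<Longrightarrow> cox_eq M (u @ a @ v) (u @ b @ v)"
proof (induction arbitrary: u v rule: cox_eq.induct)
  case (cox_braid s t k p q)
  from cox_braid have "cox_eq M ((u @ p) @ alt_R t s k @ (q @ v)) ((u @ p) @ alt_R s t k @ (q @ v))"
    by (rule cox_eq.cox_braid)
  then show ?case by simp
next
  case (cox_cancel p x q)
  from cox_eq.cox_cancel[of M "u @ p" x "q @ v"] show ?case by simp
qed (blast intro: cox_eq.cox_refl cox_eq.cox_sym cox_eq.cox_trans)+

lemma cox_eq_append: "cox_eq M a b \<Longrightarrow> cox_eq M c d \<Longrightarrow> cox_eq M (a @ c) (b @ d)"
  using cox_eq_append_cong[of M a b "[]" c] cox_eq_append_cong[of M c d b "[]"]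
  by (simp add: cox_eq.cox_trans)

lemma cox_eq_snoc_snoc: "cox_eq M (p @ [x, x]) p"
  using cox_eq.cox_cancel[of M p x "[]"] by simp

lemma cox_eq_append_rev: "cox_eq M (v @ rev v) []"
proof (induction v)
  case (Cons x v)
  have "cox_eq M ([x] @ (v @ rev v) @ [x]) ([x] @ [] @ [x])"
    by (rule cox_eq_append_cong[OF Cons])
  moreover have "cox_eq M ([] @ [x, x] @ []) []"
    using cox_eq.cox_cancel[of M "[]" x "[]"] by simp
  ultimately show ?case
    using cox_eq.cox_trans by fastforce
qed (simp add: cox_eq.cox_refl)

lemma pos_append [simp]: "pos (a @ b) = pos a @ pos b"
  by (simp add: pos_def)

lemma iotaW_append [simp]: "iotaW (a @ b) = iotaW a @ iotaW b"
  by (simp add: iotaW_def)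

lemma iotaW_alt_R: "iotaW (alt_R b a k) = pos (alt_R (Tau b) (Tau a) k)"
  by (simp add: iotaW_def map_alt_R)

lemma va_eq_iotaW: "cox_eq M x y \<Longrightarrow> va_eq M (iotaW x) (iotaW y)"
  unfolding va_eq_def
proof (induction rule: cox_eq.induct)
  case (cox_braid s t k p q)
  have "(pos (alt_R (Tau t) (Tau s) k), pos (alt_R (Tau s) (Tau t) k)) \<in> va_rels M"
    using cox_braid unfolding va_rels_def by blast
  from pres_eq.pres_rel[OF this, of "iotaW p" "iotaW q"] show ?case
    by (simp add: iotaW_alt_R)
next
  case (cox_cancel p x q)
  have "(pos [Tau x, Tau x], []) \<in> va_rels M"
    unfolding va_rels_def by blast
  from pres_eq.pres_rel[OF this, of "iotaW p" "iotaW q"] show ?case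
    by (simp add: iotaW_def pos_def)
qed (blast intro: pres_eq.pres_refl pres_eq.pres_sym pres_eq.pres_trans)+

lemma wconj_eq_conj_word: "wconj u g = conj_word (iotaW u) g"
  by (simp add: wconj_def conj_word_def)

lemma wconj_append: "wconj (x @ y) g = wconj x (wconj y g)"
  by (simp add: wconj_eq_conj_word conj_word_append)

lemma va_eq_wconj_cong:
  "cox_eq M x y \<Longrightarrow> va_eq M g g' \<Longrightarrow> va_eq M (wconj x g) (wconj y g')"
  unfolding wconj_eq_conj_word va_eq_def
  by (rule conj_word_cong[OF va_eq_iotaW[unfolded va_eq_def]])

lemma va_eq_sym: "va_eq M a b \<Longrightarrow> va_eq M b a"
  unfolding va_eq_def by (rule pres_eq.pres_sym)

lemma va_eq_trans: "va_eq M a b \<Longrightarrow> va_eq M b c \<Longrightarrow> va_eq M a c"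
  unfolding va_eq_def by (rule pres_eq.pres_trans)

definition conj_gen :: "('a \<Rightarrow> 'a \<Rightarrow> enat) \<Rightarrow> 'a list \<Rightarrow> 'a \<Rightarrow> 'a \<Rightarrow> bool" where
  "conj_gen M z a c \<longleftrightarrow>
     va_eq M (wconj z (pos [Tau a])) (pos [Tau c]) \<and> va_eq M (wconj z (pos [Sig a])) (pos [Sig c])"

lemma conj_gen_Nil: "conj_gen M [] a a"
  by (simp add: conj_gen_def wconj_def iotaW_def pos_def winv_def va_eq_def pres_eq.pres_refl)

lemma conj_gen_trans:
  assumes "cox_eq M z (z2 @ P)" "conj_gen M P a r" "conj_gen M z2 r c"
  shows "conj_gen M z a c"
proof -
  have "va_eq M (wconj z g) (wconj z2 g')" if "va_eq M (wconj P g) g'" for g g'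
  proof -
    have "va_eq M (wconj z g) (wconj (z2 @ P) g)"
      by (rule va_eq_wconj_cong[OF assms(1)]) (simp add: va_eq_def pres_eq.pres_refl)
    then show ?thesis
      using va_eq_wconj_cong[OF cox_refl that, of z2] by (simp add: wconj_append va_eq_trans)
  qed
  then show ?thesis
    using assms(2,3) unfolding conj_gen_def by (blast intro: va_eq_trans)
qed

lemma conj_gen_cox_eq: "cox_eq M z z' \<Longrightarrow> conj_gen M z' a c \<Longrightarrow> conj_gen M z a c"
  by (rule conj_gen_trans[of M z "z' @ []" "[]" a a c]) (simp_all add: conj_gen_Nil)

lemma wconj_rev_append: "va_eq M (wconj u g) (wconj v (wconj (rev v @ u) g))"
proof -
  have "cox_eq M (v @ rev v @ u) u"
    using cox_eq_append[OF cox_eq_append_rev cox_refl, of M v u] by simp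
  then have "va_eq M (wconj (v @ rev v @ u) g) (wconj u g)"
    by (rule va_eq_wconj_cong) (simp add: va_eq_def pres_eq.pres_refl)
  then show ?thesis
    by (simp add: wconj_append va_eq_sym)
qed

lemma conj_gen_Tau_Sig:
  assumes "conj_gen M z a c"
  shows "va_eq M (wconj z (pos [Tau a, Sig a])) (pos [Tau c, Sig c])"
proof -
  have "va_eq M (wconj z (pos [Tau a] @ pos [Sig a])) (pos [Tau c] @ pos [Sig c])"
    using conj_word_append_distrib pres_eq_append assms
    unfolding conj_gen_def va_eq_def wconj_eq_conj_word by (blast intro: pres_eq.pres_trans)
  then show ?thesis
    by (simp add: pos_def)
qed

lemma conj_gen_alt_R:
  assumes "s \<noteq> t" "M s t = enat m" "2 \<le> m"
  shows "conj_gen M (alt_R s t (m - 1)) s (if even m then s else t)"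
proof -
  let ?r = "if even m then s else t"
  let ?P = "alt_R (Tau s) (Tau t) (m - 1)"
  have m: "Suc (m - 1) = m" "(if even (m - 1) then Tau t else Tau s) = Tau ?r"
    using assms(3) by auto
  have "(pos (alt_R (Tau t) (Tau s) m), pos (alt_R (Tau s) (Tau t) m)) \<in> va_rels M"
    using assms(1,2) unfolding va_rels_def by blast
  from pres_eq.pres_rel[OF this, of "[]" "[]"]
  have "pres_eq (va_rels M) (pos (?P @ [Tau s])) (pos (Tau ?r # ?P))"
    using alt_R_Suc_snoc[of "Tau t" "Tau s" "m - 1"] alt_R_Suc[of "Tau s" "Tau t" "m - 1"]
    by (simp only: m) simp
  then have "pres_eq (va_rels M) (pos ?P @ pos [Tau s]) (pos [Tau ?r] @ pos ?P)"
    by (simp add: pos_def)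
  moreover have "(pos (?P @ [Sig s]), pos (Sig ?r # ?P)) \<in> va_rels M"
    using assms(1,2) unfolding va_rels_def by blast
  from pres_eq.pres_rel[OF this, of "[]" "[]"]
  have "pres_eq (va_rels M) (pos ?P @ pos [Sig s]) (pos [Sig ?r] @ pos ?P)"
    by (simp add: pos_def)
  ultimately show ?thesis
    unfolding conj_gen_def wconj_eq_conj_word iotaW_alt_R va_eq_def
    using conj_word_eqI by blast
qed

section \<open>The geometric representation\<close>

definition fin_supp :: "('a \<Rightarrow> real) \<Rightarrow> bool" where
  "fin_supp v \<longleftrightarrow> finite {x. v x \<noteq> 0}"

lemma fin_supp_root [simp]: "fin_supp (root s)"
proof -
  have "{x. root s x \<noteq> 0} = {s}" by (auto simp: root_def)
  then show ?thesis by (simp add: fin_supp_def)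
qed

lemma fin_supp_lin [simp]: "fin_supp v \<Longrightarrow> fin_supp w \<Longrightarrow> fin_supp (\<lambda>x. a * v x + b * w x)"
  unfolding fin_supp_def by (rule finite_subset[of _ "{x. v x \<noteq> 0} \<union> {x. w x \<noteq> 0}"]) auto

lemma fin_supp_scale [simp]: "fin_supp v \<Longrightarrow> fin_supp (\<lambda>x. a * v x)"
  unfolding fin_supp_def by (rule finite_subset[of _ "{x. v x \<noteq> 0}"]) auto

lemma fin_supp_refl_act [simp]: "fin_supp v \<Longrightarrow> fin_supp (refl_act M s v)"
  unfolding fin_supp_def refl_act_def
  by (rule finite_subset[of _ "{x. v x \<noteq> 0} \<union> {s}"]) (auto simp: root_def)

lemma word_act_Nil [simp]: "word_act M [] v = v"
  by (simp add: word_act_def)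

lemma word_act_Cons [simp]: "word_act M (x # z) v = refl_act M x (word_act M z v)"
  by (simp add: word_act_def)

lemma word_act_append [simp]: "word_act M (y @ z) v = word_act M y (word_act M z v)"
  by (simp add: word_act_def)

lemma fin_supp_word_act [simp]: "fin_supp v \<Longrightarrow> fin_supp (word_act M z v)"
  by (induction z) auto

lemma bform_root_eq_sum:
  assumes "finite S" "{y. v y \<noteq> 0} \<subseteq> S"
  shows "bform M v (root x) = (\<Sum>y\<in>S. v y * bform_gen M y x)"
proof -
  have "{t. root x t \<noteq> 0} = {x}" by (auto simp: root_def)
  then have "bform M v (root x) = (\<Sum>y\<in>{y. v y \<noteq> 0}. v y * bform_gen M y x)"
    by (simp add: bform_def root_def)
  also have "\<dots> = (\<Sum>y\<in>S. v y * bform_gen M y x)"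
    using assms by (intro sum.mono_neutral_left) auto
  finally show ?thesis .
qed

lemma bform_root_root: "bform M (root y) (root x) = bform_gen M y x"
  using bform_root_eq_sum[of "{y}" "root y" M x] by (simp add: root_def)

lemma bform_lin_root:
  assumes "fin_supp v" "fin_supp w"
  shows "bform M (\<lambda>x. a * v x + b * w x) (root s) = a * bform M v (root s) + b * bform M w (root s)"
proof -
  let ?S = "{x. v x \<noteq> 0} \<union> {x. w x \<noteq> 0}"
  have fin: "finite ?S" using assms by (simp add: fin_supp_def)
  have "bform M (\<lambda>x. a * v x + b * w x) (root s) = (\<Sum>y\<in>?S. (a * v y + b * w y) * bform_gen M y s)"
    using fin by (intro bform_root_eq_sum) auto
  also have "\<dots> = a * (\<Sum>y\<in>?S. v y * bform_gen M y s) + b * (\<Sum>y\<in>?S. w y * bform_gen M y s)"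
    by (simp add: sum_distrib_left sum.distrib algebra_simps)
  also have "\<dots> = a * bform M v (root s) + b * bform M w (root s)"
    using bform_root_eq_sum[OF fin, of v] bform_root_eq_sum[OF fin, of w] by auto
  finally show ?thesis .
qed

lemma refl_act_lin:
  assumes "fin_supp v" "fin_supp w"
  shows "refl_act M s (\<lambda>x. a * v x + b * w x) = (\<lambda>x. a * refl_act M s v x + b * refl_act M s w x)"
  unfolding refl_act_def bform_lin_root[OF assms] by (auto simp: algebra_simps)

lemma word_act_lin:
  assumes "fin_supp v" "fin_supp w"
  shows "word_act M z (\<lambda>x. a * v x + b * w x) = (\<lambda>x. a * word_act M z v x + b * word_act M z w x)"
  using assms by (induction z) (auto simp: refl_act_lin)

lemma word_act_scale:
  "fin_supp v \<Longrightarrow> word_act M z (\<lambda>x. a * v x) = (\<lambda>x. a * word_act M z v x)"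
  using word_act_lin[of v v M z a 0] by simp

lemma word_act_uminus:
  "fin_supp v \<Longrightarrow> word_act M z (\<lambda>x. - v x) = (\<lambda>x. - word_act M z v x)"
  using word_act_scale[of v M z "-1"] by simp

definition coxeter_cos :: "('a \<Rightarrow> 'a \<Rightarrow> enat) \<Rightarrow> 'a \<Rightarrow> 'a \<Rightarrow> real" where
  "coxeter_cos M s t = (case M s t of enat k \<Rightarrow> cos (pi / real k) | \<infinity> \<Rightarrow> 1)"

lemma bform_gen_eq: "bform_gen M s t = -2 * coxeter_cos M s t"
  by (cases "M s t") (simp_all add: bform_gen_def coxeter_cos_def)

text \<open>\<open>chebU c n\<close> is the Chebyshev polynomial of the second kind \<open>U\<^sub>n\<^sub>-\<^sub>1(c)\<close>, shifted so that
  \<open>chebU (cos \<theta>) n = sin (n \<theta>) / sin \<theta>\<close>.\<close>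
fun chebU :: "real \<Rightarrow> nat \<Rightarrow> real" where
  "chebU c 0 = 0"
| "chebU c (Suc 0) = 1"
| "chebU c (Suc (Suc n)) = 2 * c * chebU c (Suc n) - chebU c n"

lemma chebU_1: "chebU 1 n = real n"
  by (induction "1::real" n rule: chebU.induct) auto

lemma chebU_cos: "chebU (cos \<theta>) n * sin \<theta> = sin (real n * \<theta>)"
proof (induction "cos \<theta>" n rule: chebU.induct)
  case (3 n)
  define x where "x = real (Suc n) * \<theta>"
  have "chebU (cos \<theta>) (Suc (Suc n)) * sin \<theta> =
      2 * cos \<theta> * (chebU (cos \<theta>) (Suc n) * sin \<theta>) - chebU (cos \<theta>) n * sin \<theta>"
    by (simp add: algebra_simps)
  also have "\<dots> = 2 * cos \<theta> * sin x - sin (x - \<theta>)"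
    using 3 by (simp add: x_def algebra_simps)
  also have "\<dots> = sin (x + \<theta>)"
    by (simp add: sin_add sin_diff)
  finally show ?case
    by (simp add: x_def algebra_simps)
qed simp_all

locale coxeter =
  fixes M :: "'a \<Rightarrow> 'a \<Rightarrow> enat"
  assumes coxeter_matrix: "coxeter_matrix M"
begin

lemma bform_gen_self [simp]: "bform_gen M s s = 2"
  using coxeter_matrix by (simp add: coxeter_matrix_def bform_gen_def one_enat_def)

lemma order_sym: "M s t = M t s"
  using coxeter_matrix by (cases "s = t") (auto simp: coxeter_matrix_def)

lemma order_ge_2: "s \<noteq> t \<Longrightarrow> M s t = enat m \<Longrightarrow> 2 \<le> m"
  using coxeter_matrix unfolding coxeter_matrix_def by (metis enat_ord_simps(1) numeral_eq_enat)

lemma bform_gen_sym: "bform_gen M s t = bform_gen M t s"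
  by (simp add: bform_gen_def order_sym)

lemma refl_act_root: "refl_act M s (root s) = (\<lambda>x. - root s x)"
  unfolding refl_act_def bform_root_root by simp

lemma refl_act_refl_act: "fin_supp v \<Longrightarrow> refl_act M s (refl_act M s v) = v"
proof -
  assume v: "fin_supp v"
  have "refl_act M s v = (\<lambda>x. 1 * v x + (- bform M v (root s)) * root s x)"
    by (simp add: refl_act_def)
  then have "bform M (refl_act M s v) (root s) = - bform M v (root s)"
    by (simp only: bform_lin_root[OF v fin_supp_root] bform_root_root) simp
  then show ?thesis
    by (simp add: refl_act_def)
qed

lemma word_act_rev: "fin_supp v \<Longrightarrow> word_act M (rev z) (word_act M z v) = v"
  by (induction z arbitrary: v) (auto simp: refl_act_refl_act)

lemma word_act_inj: "fin_supp v \<Longrightarrow> fin_supp w \<Longrightarrow> word_act M z v = word_act M z w \<Longrightarrow> v = w"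
  by (metis word_act_rev)

lemma chebU_coxeter_cos:
  assumes "s \<noteq> t" "M s t = enat m"
  shows "chebU (coxeter_cos M s t) n = sin (real n * (pi / real m)) / sin (pi / real m)"
    and "0 < sin (pi / real m)"
proof -
  have m: "2 \<le> m" using order_ge_2[OF assms] .
  show "0 < sin (pi / real m)"
    using m by (intro sin_gt_zero) (auto simp: field_simps)
  then show "chebU (coxeter_cos M s t) n = sin (real n * (pi / real m)) / sin (pi / real m)"
    using chebU_cos[of "pi / real m" n] assms(2) by (simp add: coxeter_cos_def field_simps)
qed

lemma chebU_nonneg:
  assumes "s \<noteq> t" "enat n \<le> M s t"
  shows "0 \<le> chebU (coxeter_cos M s t) n"
proof (cases "M s t")
  case (enat m)
  have "real n * (pi / real m) \<le> pi"
    using assms(2) order_ge_2[OF assms(1) enat] enat by (simp add: field_simps)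
  then show ?thesis
    using chebU_coxeter_cos[OF assms(1) enat] by (simp add: sin_ge_zero)
qed (simp add: coxeter_cos_def chebU_1)

lemma chebU_pos:
  assumes "s \<noteq> t" "0 < n" "enat n < M s t"
  shows "0 < chebU (coxeter_cos M s t) n"
proof (cases "M s t")
  case (enat m)
  have "0 < sin (real n * (pi / real m))"
    using assms enat by (intro sin_gt_zero) (auto simp: field_simps)
  then show ?thesis
    using chebU_coxeter_cos[OF assms(1) enat] by simp
qed (use assms in \<open>simp add: coxeter_cos_def chebU_1\<close>)

lemma chebU_order:
  assumes "s \<noteq> t" "M s t = enat m"
  shows "chebU (coxeter_cos M s t) m = 0" "chebU (coxeter_cos M s t) (m - 1) = 1"
    and "chebU (coxeter_cos M s t) (Suc m) = -1"
proof -
  have m: "2 \<le> m" using order_ge_2[OF assms] .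
  have "real m * (pi / real m) = pi" using m by simp
  then show "chebU (coxeter_cos M s t) m = 0"
    using chebU_coxeter_cos(1)[OF assms, of m] by simp
  have "real (m - 1) * (pi / real m) = pi - pi / real m"
    using m by (simp add: of_nat_diff field_simps)
  then show "chebU (coxeter_cos M s t) (m - 1) = 1"
    using chebU_coxeter_cos(1)[OF assms, of "m - 1"] chebU_coxeter_cos(2)[OF assms] by simp
  have "real (Suc m) * (pi / real m) = pi / real m + pi"
    using m by (simp add: field_simps)
  then show "chebU (coxeter_cos M s t) (Suc m) = -1"
    using chebU_coxeter_cos(1)[OF assms, of "Suc m"] chebU_coxeter_cos(2)[OF assms] by simp
qed

lemma coxeter_cos_bounds:
  assumes "s \<noteq> t" "M s t = enat m"
  shows "0 \<le> coxeter_cos M s t" "coxeter_cos M s t < 1"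
proof -
  have m: "2 \<le> m" using order_ge_2[OF assms] .
  have p: "0 < pi / real m" "pi / real m \<le> pi / 2" using m by (auto simp: field_simps)
  show "0 \<le> coxeter_cos M s t"
    using assms p by (simp add: coxeter_cos_def cos_ge_zero)
  have "cos (pi / real m) < cos 0"
    using p pi_gt_zero by (intro cos_monotone_0_pi) linarith+
  then show "coxeter_cos M s t < 1"
    using assms by (simp add: coxeter_cos_def)
qed

lemma bform_root_pair:
  assumes "s \<noteq> t"
  shows "bform M (\<lambda>x. p * root s x + q * root t x) (root s) = 2 * p - 2 * coxeter_cos M s t * q"
    and "bform M (\<lambda>x. p * root s x + q * root t x) (root t) = 2 * q - 2 * coxeter_cos M s t * p"
  unfolding bform_lin_root[OF fin_supp_root fin_supp_root] bform_root_root bform_gen_self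
  using bform_gen_sym[of t s] by (simp_all add: bform_gen_eq)

lemma refl_act_root_pair:
  assumes "s \<noteq> t"
  shows "refl_act M t (\<lambda>x. p * root s x + q * root t x) =
      (\<lambda>x. p * root s x + (2 * coxeter_cos M s t * p - q) * root t x)"
  unfolding refl_act_def bform_root_pair[OF assms] by (simp add: algebra_simps)

lemma word_act_alt_R_root:
  assumes "s \<noteq> t"
  shows "word_act M (alt_R s t k) (root s) =
    (\<lambda>x. chebU (coxeter_cos M s t) (Suc k) * root (if even k then s else t) x
       + chebU (coxeter_cos M s t) k * root (if even k then t else s) x)"
proof (induction k)
  case (Suc k)
  let ?U = "chebU (coxeter_cos M s t)"
  show ?case
  proof (cases "even k")
    case True
    have "word_act M (alt_R s t (Suc k)) (root s) =
        refl_act M t (\<lambda>x. ?U (Suc k) * root s x + ?U k * root t x)"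
      using Suc True by (simp add: alt_R_Suc)
    then show ?thesis
      using True by (simp only: refl_act_root_pair[OF assms]) (simp add: add.commute)
  next
    case False
    have "word_act M (alt_R s t (Suc k)) (root s) =
        refl_act M s (\<lambda>x. ?U (Suc k) * root t x + ?U k * root s x)"
      using Suc False by (simp add: alt_R_Suc)
    moreover have "coxeter_cos M t s = coxeter_cos M s t"
      by (simp add: coxeter_cos_def order_sym)
    ultimately show ?thesis
      using False by (simp only: refl_act_root_pair[OF assms[symmetric]]) (simp add: add.commute)
  qed
qed simp

lemma word_act_alt_R_order_root:
  assumes "s \<noteq> t" "M s t = enat m"
  shows "word_act M (alt_R s t (m - 1)) (root s) = root (if even m then s else t)"
proof -
  have m: "Suc (m - 1) = m" "even (m - 1) \<longleftrightarrow> odd m"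
    using order_ge_2[OF assms] by auto
  show ?thesis
    unfolding word_act_alt_R_root[OF assms(1)] m chebU_order[OF assms] by auto
qed

lemma word_act_braid_root:
  assumes "s \<noteq> t" "M s t = enat m"
  shows "word_act M (alt_R t s m) (root s) = word_act M (alt_R s t m) (root s)"
proof -
  have m: "Suc (m - 1) = m" using order_ge_2[OF assms] by simp
  have "word_act M (alt_R t s m) (root s) = word_act M (alt_R s t (m - 1)) (\<lambda>x. - root s x)"
    using alt_R_Suc_snoc[of t s "m - 1"] m refl_act_root by simp
  also have "\<dots> = (\<lambda>x. - root (if even m then s else t) x)"
    using word_act_alt_R_order_root[OF assms] by (simp add: word_act_uminus)
  also have "\<dots> = word_act M (alt_R s t m) (root s)"
    unfolding word_act_alt_R_root[OF assms(1), of m] using chebU_order[OF assms] by simp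
  finally show ?thesis .
qed

lemma word_act_orthogonal:
  assumes "bform M v (root s) = 0" "bform M v (root t) = 0" "set z \<subseteq> {s, t}"
  shows "word_act M z v = v"
  using assms(3) by (induction z) (use assms(1,2) in \<open>auto simp: refl_act_def\<close>)

text \<open>For finite \<open>m\<close> the form is positive definite on the span of \<open>\<alpha>\<^sub>s, \<alpha>\<^sub>t\<close>, so every vector
  splits into a component in that span and one orthogonal to it.\<close>
lemma orthogonal_decomposition:
  assumes "s \<noteq> t" "M s t = enat m" "fin_supp v"
  obtains p q w where "fin_supp w" "bform M w (root s) = 0" "bform M w (root t) = 0"
    "v = (\<lambda>x. 1 * w x + 1 * (p * root s x + q * root t x))"
proof -
  let ?c = "coxeter_cos M s t"
  define d where "d = 1 - ?c * ?c"
  have c: "0 \<le> ?c" "?c < 1" using coxeter_cos_bounds[OF assms(1,2)] by auto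
  then have "?c * ?c \<le> ?c" by (simp add: mult_left_le_one_le)
  then have d: "d > 0" using c unfolding d_def by linarith
  define a where "a = bform M v (root s)"
  define b where "b = bform M v (root t)"
  define r where "r = (\<lambda>x. (a + ?c * b) / (2 * d) * root s x + (b + ?c * a) / (2 * d) * root t x)"
  define w where "w = (\<lambda>x. 1 * v x + (-1) * r x)"
  have r: "fin_supp r" "bform M r (root s) = a" "bform M r (root t) = b"
  proof -
    show "fin_supp r" unfolding r_def by (rule fin_supp_lin) simp_all
    have "2 * ((a + ?c * b) / (2 * d)) - 2 * ?c * ((b + ?c * a) / (2 * d))
        = ((a + ?c * b) - ?c * (b + ?c * a)) / d"
      "2 * ((b + ?c * a) / (2 * d)) - 2 * ?c * ((a + ?c * b) / (2 * d))
        = ((b + ?c * a) - ?c * (a + ?c * b)) / d"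
      using d by (simp_all add: field_simps)
    moreover have "(a + ?c * b) - ?c * (b + ?c * a) = a * d" "(b + ?c * a) - ?c * (a + ?c * b) = b * d"
      by (simp_all add: d_def algebra_simps)
    ultimately show "bform M r (root s) = a" "bform M r (root t) = b"
      using d unfolding r_def bform_root_pair[OF assms(1)] by simp_all
  qed
  have "fin_supp w" unfolding w_def using assms(3) r(1) by (rule fin_supp_lin)
  moreover have "bform M w (root s) = 0" "bform M w (root t) = 0"
    unfolding w_def bform_lin_root[OF assms(3) r(1)] r(2,3) a_def b_def by simp_all
  moreover have "v = (\<lambda>x. 1 * w x + 1 * r x)" by (simp add: w_def)
  ultimately show thesis
    using that unfolding r_def by blast
qed

lemma word_act_braid:
  assumes "s \<noteq> t" "M s t = enat m" "fin_supp v"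
  shows "word_act M (alt_R t s m) v = word_act M (alt_R s t m) v"
proof -
  obtain p q w where w: "fin_supp w" "bform M w (root s) = 0" "bform M w (root t) = 0"
    and v: "v = (\<lambda>x. 1 * w x + 1 * (p * root s x + q * root t x))"
    using orthogonal_decomposition[OF assms] .
  have "word_act M (alt_R t s m) (root t) = word_act M (alt_R s t m) (root t)"
    using word_act_braid_root[of t s m] assms(1,2) order_sym by metis
  then have "word_act M z v = (\<lambda>x. w x + (p * word_act M z (root s) x + q * word_act M z (root t) x))"
    if "z = alt_R t s m \<or> z = alt_R s t m" for z
    using that set_alt_R[of s t m] set_alt_R[of t s m] word_act_orthogonal[OF w(2,3)]
    unfolding v word_act_lin[OF w(1) fin_supp_lin[OF fin_supp_root fin_supp_root]]
      word_act_lin[OF fin_supp_root fin_supp_root]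
    by (auto simp: insert_commute)
  then show ?thesis
    using word_act_braid_root[OF assms(1,2)] word_act_braid_root[of t s m] assms(1,2) order_sym
    by (metis)
qed

lemma word_act_cox_eq: "cox_eq M x y \<Longrightarrow> fin_supp v \<Longrightarrow> word_act M x v = word_act M y v"
proof (induction rule: cox_eq.induct)
  case (cox_braid s t k p q)
  then show ?case using word_act_braid[OF cox_braid(1,2), of "word_act M q v"] by simp
qed (auto simp: refl_act_refl_act)

end

section \<open>Length and parabolic factorizations\<close>

definition cox_length :: "('a \<Rightarrow> 'a \<Rightarrow> enat) \<Rightarrow> 'a list \<Rightarrow> nat" where
  "cox_length M w = (LEAST n. \<exists>y. cox_eq M y w \<and> length y = n)"

definition parabolic_length :: "('a \<Rightarrow> 'a \<Rightarrow> enat) \<Rightarrow> 'a set \<Rightarrow> 'a list \<Rightarrow> nat" where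
  "parabolic_length M I w = (LEAST n. \<exists>y. set y \<subseteq> I \<and> cox_eq M y w \<and> length y = n)"

lemma cox_length_witness:
  obtains y where "cox_eq M y w" "length y = cox_length M w"
proof -
  have "\<exists>y. cox_eq M y w \<and> length y = cox_length M w"
    unfolding cox_length_def by (rule LeastI_ex) (use cox_refl in blast)
  then show thesis using that by blast
qed

lemma cox_length_le: "cox_eq M y w \<Longrightarrow> cox_length M w \<le> length y"
  unfolding cox_length_def by (rule Least_le) blast

lemma cox_length_cox_eq: "cox_eq M a b \<Longrightarrow> cox_length M a = cox_length M b"
proof -
  assume ab: "cox_eq M a b"
  obtain y where y: "cox_eq M y a" "length y = cox_length M a" by (rule cox_length_witness)
  obtain z where z: "cox_eq M z b" "length z = cox_length M b" by (rule cox_length_witness)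
  have "cox_length M b \<le> cox_length M a"
    using cox_length_le[of M y b] y ab by (auto intro: cox_trans)
  moreover have "cox_length M a \<le> cox_length M b"
    using cox_length_le[of M z a] z ab by (auto intro: cox_trans cox_sym)
  ultimately show ?thesis by simp
qed

lemma cox_length_append_le: "cox_eq M y' y \<Longrightarrow> cox_length M (v @ y) \<le> cox_length M v + length y'"
proof -
  assume y: "cox_eq M y' y"
  obtain v' where v': "cox_eq M v' v" "length v' = cox_length M v" by (rule cox_length_witness)
  show ?thesis
    using cox_length_le[OF cox_eq_append[OF v'(1) y]] v'(2) by simp
qed

lemma cox_length_eq_0: "cox_length M w = 0 \<Longrightarrow> cox_eq M [] w"
  by (metis cox_length_witness length_0_conv)

lemma reduced_word_snoc:
  assumes "0 < cox_length M w"
  obtains w1 r where "cox_eq M (w1 @ [r]) w" "Suc (length w1) = cox_length M w"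
proof -
  obtain w0 where w0: "cox_eq M w0 w" "length w0 = cox_length M w" by (rule cox_length_witness)
  then have "w0 = butlast w0 @ [last w0]" using assms by (metis append_butlast_last_id list.size(3) less_irrefl)
  then show thesis
    using that[of "butlast w0" "last w0"] w0 assms by simp
qed

lemma cox_length_snoc_less:
  assumes "cox_eq M (w1 @ [r]) w" "Suc (length w1) = cox_length M w"
  shows "cox_length M (w @ [r]) < cox_length M w"
proof -
  have "cox_eq M (w1 @ [r, r]) (w @ [r])"
    using cox_eq_append[OF assms(1) cox_refl, of "[r]"] by simp
  then have "cox_eq M w1 (w @ [r])"
    using cox_eq_snoc_snoc by (metis cox_sym cox_trans)
  then show ?thesis
    using cox_length_le assms(2) by fastforce
qed

lemma parabolic_length_witness:
  assumes "set w \<subseteq> I"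
  obtains y where "set y \<subseteq> I" "cox_eq M y w" "length y = parabolic_length M I w"
proof -
  have "\<exists>y. set y \<subseteq> I \<and> cox_eq M y w \<and> length y = parabolic_length M I w"
    unfolding parabolic_length_def by (rule LeastI_ex) (use assms cox_refl in blast)
  then show thesis using that by blast
qed

lemma parabolic_length_le: "set y \<subseteq> I \<Longrightarrow> cox_eq M y w \<Longrightarrow> parabolic_length M I w \<le> length y"
  unfolding parabolic_length_def by (rule Least_le) blast

lemma parabolic_length_Cons_le:
  assumes "set y \<subseteq> I" "x \<in> I"
  shows "parabolic_length M I (x # y) \<le> Suc (parabolic_length M I y)"
proof -
  obtain y' where y': "set y' \<subseteq> I" "cox_eq M y' y" "length y' = parabolic_length M I y"
    using parabolic_length_witness[OF assms(1)] .
  have "cox_eq M ([x] @ y') ([x] @ y)" by (rule cox_eq_append[OF cox_refl y'(2)])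
  then show ?thesis
    using parabolic_length_le[of "x # y'" I M "x # y"] y' assms(2) by simp
qed

lemma cox_length_append_parabolic_le:
  "set y \<subseteq> I \<Longrightarrow> cox_length M (v @ y) \<le> cox_length M v + parabolic_length M I y"
  by (metis parabolic_length_witness cox_length_append_le)

lemma parabolic_reduced_alternating:
  assumes "set y \<subseteq> I" "cox_eq M y w" "length y = parabolic_length M I w"
  shows "alternating y"
proof (rule ccontr)
  assume "\<not> alternating y"
  then obtain p x q where y: "y = p @ [x, x] @ q" by (rule not_alternating_split)
  then have "cox_eq M (p @ q) w"
    using cox_cancel[of M p x q] assms(2) by (metis cox_sym cox_trans)
  then have "parabolic_length M I w \<le> length (p @ q)"
    using assms(1) y by (intro parabolic_length_le) auto
  then show False
    using assms(3) y by simp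
qed

lemma minimal_parabolic_factorization:
  assumes "cox_eq M (w1 @ [r]) w" "Suc (length w1) = cox_length M w" "r \<in> I"
  obtains x y where "set y \<subseteq> I" "cox_eq M (x @ y) w"
    "cox_length M x + parabolic_length M I y = cox_length M w" "cox_length M x < cox_length M w"
    "\<And>q. q \<in> I \<Longrightarrow> cox_length M x \<le> cox_length M (x @ [q])"
proof -
  let ?n = "cox_length M w"
  define Fact where "Fact = (\<lambda>(x, y). set y \<subseteq> I \<and> cox_eq M (x @ y) w
      \<and> cox_length M x + parabolic_length M I y = ?n)"
  have lower: "?n \<le> cox_length M x + parabolic_length M I y"
    if "set y \<subseteq> I" "cox_eq M (x @ y) w" for x y
    using cox_length_append_parabolic_le[OF that(1), of M x] cox_length_cox_eq[OF that(2)] by simp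
  have w1: "cox_length M w1 < ?n"
    using cox_length_le[OF cox_refl, of M w1] assms(2) by simp
  have "parabolic_length M I [r] \<le> 1"
    using parabolic_length_le[OF _ cox_refl, of "[r]" I M] assms(3) by simp
  then have "Fact (w1, [r])"
    using lower[of "[r]" w1] assms w1 unfolding Fact_def by auto
  then obtain xy where xy: "Fact xy" "\<And>z. Fact z \<Longrightarrow> cox_length M (fst xy) \<le> cox_length M (fst z)"
    using ex_has_least_nat[of Fact "(w1, [r])" "\<lambda>z. cox_length M (fst z)"] by blast
  obtain x y where x: "xy = (x, y)" by (cases xy)
  have F: "set y \<subseteq> I" "cox_eq M (x @ y) w" "cox_length M x + parabolic_length M I y = ?n"
    using xy(1) x by (auto simp: Fact_def)
  have min: "cox_length M x \<le> cox_length M x'" if "Fact (x', y')" for x' y'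
    using xy(2)[OF that] x by simp
  have "cox_length M x \<le> cox_length M (x @ [q])" if q: "q \<in> I" for q
  proof (rule ccontr)
    assume less: "\<not> ?thesis"
    have "cox_eq M (x @ [q, q] @ y) (x @ y)" by (rule cox_cancel)
    then have xq: "cox_eq M ((x @ [q]) @ (q # y)) w"
      using F(2) by (simp, metis cox_trans)
    have "set (q # y) \<subseteq> I" using F(1) q by simp
    then have "Fact (x @ [q], q # y)"
      using lower[OF _ xq] parabolic_length_Cons_le[OF F(1) q, of M] less F(3) xq
      unfolding Fact_def by auto
    then show False using min less by fastforce
  qed
  then show thesis
    using that F min[OF \<open>Fact (w1, [r])\<close>] w1 by simp
qed

section \<open>Positivity of roots\<close>

definition nonneg_coeffs :: "('a \<Rightarrow> real) \<Rightarrow> bool" where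
  "nonneg_coeffs v \<longleftrightarrow> (\<forall>x. 0 \<le> v x)"

lemma alt_R_snoc_cox_eq_shorter:
  assumes "s \<noteq> t" "M s t = enat m" "2 \<le> m" "m \<le> k"
  obtains y where "set y \<subseteq> {s, t}" "length y < k" "cox_eq M y (alt_R s t k @ [s])"
proof -
  define P where "P = (if even m then alt_R s t (k - m) else alt_R t s (k - m))"
  have m: "Suc (m - 1) = m" using assms(3) by simp
  have "alt_R s t k = P @ alt_R s t m"
    using alt_R_add[of s t "k - m" m] assms(4) by (simp add: P_def)
  moreover have "cox_eq M (P @ alt_R t s m @ [s]) (P @ alt_R s t m @ [s])"
    using assms(1,2) by (rule cox_braid)
  moreover have "alt_R t s m = alt_R s t (m - 1) @ [s]"
    using alt_R_Suc_snoc[of t s "m - 1"] m by simp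
  ultimately have "cox_eq M ((P @ alt_R s t (m - 1)) @ [s, s]) (alt_R s t k @ [s])"
    by simp
  then have "cox_eq M (P @ alt_R s t (m - 1)) (alt_R s t k @ [s])"
    by (rule cox_trans[OF cox_sym[OF cox_eq_snoc_snoc]])
  moreover have "set (P @ alt_R s t (m - 1)) \<subseteq> {s, t}"
    using set_alt_R[of s t] set_alt_R[of t s] by (auto simp: P_def)
  moreover have "length (P @ alt_R s t (m - 1)) < k"
    using assms(3,4) by (simp add: P_def)
  ultimately show thesis using that by blast
qed

context coxeter
begin

lemma word_act_alt_R_root_nonneg:
  assumes "s \<noteq> t" "enat k < M s t"
  obtains p q where "0 \<le> p" "0 \<le> q"
    "word_act M (alt_R s t k) (root s) = (\<lambda>x. p * root s x + q * root t x)"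
proof -
  let ?U = "chebU (coxeter_cos M s t)"
  have "0 \<le> ?U (Suc k)" "0 \<le> ?U k"
    using chebU_nonneg[OF assms(1)] assms(2) by (simp_all add: Suc_ile_eq order_less_imp_le)
  then show thesis
    using that[of "?U (Suc k)" "?U k"] that[of "?U k" "?U (Suc k)"]
    unfolding word_act_alt_R_root[OF assms(1)] by (cases "even k") (auto simp: add.commute)
qed

lemma parabolic_reduced_eq_alt_R:
  assumes st: "s \<noteq> t" and y': "set y' \<subseteq> {s, t}" "cox_eq M y' y"
    "length y' = parabolic_length M {s, t} y" "y' \<noteq> []"
    and le: "parabolic_length M {s, t} y \<le> parabolic_length M {s, t} (y @ [s])"
  shows "y' = alt_R s t (length y')" "enat (length y') < M s t"
proof -
  have not_shorter: False if "set z \<subseteq> {s, t}" "length z < length y'" "cox_eq M z (y' @ [s])" for z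
    using parabolic_length_le[OF that(1) cox_trans[OF that(3) cox_eq_append[OF y'(2) cox_refl]]]
      that(2) le y'(3) by simp
  have "last y' = t"
  proof (rule ccontr)
    assume "last y' \<noteq> t"
    then have "last y' = s"
      using y'(1,4) last_in_set by blast
    then have e: "y' @ [s] = butlast y' @ [s, s]"
      using y'(4) by (metis append_butlast_last_id append.assoc append_Cons append_Nil)
    have "cox_eq M (butlast y') (y' @ [s])"
      unfolding e by (rule cox_sym[OF cox_eq_snoc_snoc])
    moreover have "set (butlast y') \<subseteq> {s, t}"
      using y'(1) in_set_butlastD by fastforce
    ultimately show False
      using not_shorter[of "butlast y'"] y'(4) by auto
  qed
  then show alt: "y' = alt_R s t (length y')"
    using alternating_eq_alt_R[OF parabolic_reduced_alternating[OF y'(1-3)] y'(1,4)] by blast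
  show "enat (length y') < M s t"
  proof (rule ccontr)
    assume "\<not> ?thesis"
    then obtain m where "M s t = enat m" "m \<le> length y'"
      by (cases "M s t") auto
    then obtain z where "set z \<subseteq> {s, t}" "length z < length y'"
      "cox_eq M z (alt_R s t (length y') @ [s])"
      using alt_R_snoc_cox_eq_shorter[OF st _ order_ge_2[OF st]] by blast
    then show False
      using not_shorter alt by simp
  qed
qed

lemma dihedral_root_nonneg:
  assumes st: "s \<noteq> t" and y: "set y \<subseteq> {s, t}"
    and le: "parabolic_length M {s, t} y \<le> parabolic_length M {s, t} (y @ [s])"
  obtains p q where "0 \<le> p" "0 \<le> q" "word_act M y (root s) = (\<lambda>x. p * root s x + q * root t x)"
proof -
  obtain y' where y': "set y' \<subseteq> {s, t}" "cox_eq M y' y" "length y' = parabolic_length M {s, t} y"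
    using parabolic_length_witness[OF y] .
  have act: "word_act M y (root s) = word_act M y' (root s)"
    using word_act_cox_eq[OF y'(2)] by simp
  show thesis
  proof (cases "y' = []")
    case True
    then show thesis using act that[of 1 0] by simp
  next
    case False
    note alt = parabolic_reduced_eq_alt_R[OF st y' False le]
    obtain p q where "0 \<le> p" "0 \<le> q"
      "word_act M (alt_R s t (length y')) (root s) = (\<lambda>x. p * root s x + q * root t x)"
      by (rule word_act_alt_R_root_nonneg[OF st alt(2)])
    moreover have "word_act M y (root s) = word_act M (alt_R s t (length y')) (root s)"
      using trans[OF act arg_cong[OF alt(1), of "\<lambda>z. word_act M z (root s)"]] .
    ultimately show thesis
      using that by simp
  qed
qed

lemma root_nonneg:
  "cox_length M w \<le> cox_length M (w @ [s]) \<Longrightarrow> nonneg_coeffs (word_act M w (root s))"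
proof (induction "cox_length M w" arbitrary: w s rule: less_induct)
  case less
  show ?case
  proof (cases "cox_length M w = 0")
    case True
    then have "word_act M w (root s) = root s"
      using word_act_cox_eq[OF cox_length_eq_0[OF True], of "root s"] by simp
    then show ?thesis
      by (simp add: nonneg_coeffs_def root_def)
  next
    case False
    then obtain w1 t where w1: "cox_eq M (w1 @ [t]) w" "Suc (length w1) = cox_length M w"
      using reduced_word_snoc by blast
    have ts: "t \<noteq> s"
      using cox_length_snoc_less[OF w1] less.prems by auto
    obtain x y where y: "set y \<subseteq> {s, t}" and xy: "cox_eq M (x @ y) w"
      and len: "cox_length M x + parabolic_length M {s, t} y = cox_length M w"
      and x: "cox_length M x < cox_length M w"
      and x_le: "\<And>q. q \<in> {s, t} \<Longrightarrow> cox_length M x \<le> cox_length M (x @ [q])"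
      by (rule minimal_parabolic_factorization[OF w1, of "{s, t}"]) simp_all
    have "cox_length M (w @ [s]) = cox_length M (x @ (y @ [s]))"
      using cox_length_cox_eq[OF cox_eq_append[OF xy cox_refl, of "[s]"]] by simp
    also have "\<dots> \<le> cox_length M x + parabolic_length M {s, t} (y @ [s])"
      using y by (intro cox_length_append_parabolic_le) simp
    finally have "parabolic_length M {s, t} y \<le> parabolic_length M {s, t} (y @ [s])"
      using len less.prems by simp
    then obtain p q where pq: "0 \<le> p" "0 \<le> q"
      "word_act M y (root s) = (\<lambda>x. p * root s x + q * root t x)"
      using dihedral_root_nonneg[OF ts[symmetric] y] by blast
    have "nonneg_coeffs (word_act M x (root s))" "nonneg_coeffs (word_act M x (root t))"
      using less.hyps[OF x] x_le by simp_all
    moreover have "word_act M w (root s) =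
        (\<lambda>z. p * word_act M x (root s) z + q * word_act M x (root t) z)"
      using word_act_cox_eq[OF xy, of "root s"] pq(3) by (simp add: word_act_lin)
    ultimately show ?thesis
      using pq(1,2) by (simp add: nonneg_coeffs_def)
  qed
qed

lemma root_nonpos:
  assumes "cox_length M (w @ [s]) < cox_length M w"
  shows "nonneg_coeffs (\<lambda>x. - word_act M w (root s) x)"
proof -
  have "cox_length M ((w @ [s]) @ [s]) = cox_length M w"
    using cox_length_cox_eq[OF cox_eq_snoc_snoc[of M w s]] by simp
  then have "nonneg_coeffs (word_act M (w @ [s]) (root s))"
    using assms by (intro root_nonneg) simp
  then show ?thesis
    by (simp add: refl_act_root word_act_uminus)
qed

end

section \<open>Conjugation in rank two\<close>

lemma alt_R_cox_eq_order_suffix: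
  assumes "a \<noteq> b" "M a b = enat m" "2 \<le> m"
    and "z = alt_R b a k \<and> m \<le> k \<or> z = alt_R a b k \<and> m \<le> Suc k"
  obtains z2 where "cox_eq M z (z2 @ alt_R a b (m - 1))" "set z2 \<subseteq> {a, b}" "length z2 < k"
  using assms(4)
proof
  assume z: "z = alt_R b a k \<and> m \<le> k"
  define P where "P = (if even m then alt_R b a (k - m) else alt_R a b (k - m))"
  define r where "r = (if even m then a else b)"
  have "z = P @ alt_R b a m"
    using alt_R_add[of b a "k - m" m] z by (simp add: P_def)
  moreover have "alt_R a b m = r # alt_R a b (m - 1)"
    using alt_R_Suc[of a b "m - 1"] assms(3) by (simp add: r_def)
  ultimately have "cox_eq M z ((P @ [r]) @ alt_R a b (m - 1))"
    using cox_braid[where M = M, OF assms(1,2), of P "[]"] by simp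
  moreover have "set (P @ [r]) \<subseteq> {a, b}"
    using set_alt_R[of a b] set_alt_R[of b a] by (auto simp: P_def r_def)
  moreover have "length (P @ [r]) < k"
    using z assms(3) by (simp add: P_def, linarith)
  ultimately show thesis
    by (rule that)
next
  assume z: "z = alt_R a b k \<and> m \<le> Suc k"
  define P where "P = (if even (m - 1) then alt_R a b (k - (m - 1)) else alt_R b a (k - (m - 1)))"
  have "k - (m - 1) + (m - 1) = k"
    using z by linarith
  then have "z = P @ alt_R a b (m - 1)"
    using alt_R_add[of a b "k - (m - 1)" "m - 1"] z by (simp add: P_def)
  then have "cox_eq M z (P @ alt_R a b (m - 1))"
    by (simp add: cox_refl)
  moreover have "set P \<subseteq> {a, b}"
    using set_alt_R[of a b] set_alt_R[of b a] by (auto simp: P_def)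
  moreover have "length P < k"
    using z assms(3) by (simp add: P_def, linarith)
  ultimately show thesis
    by (rule that)
qed

context coxeter
begin

lemma word_act_alt_R_root_neg:
  assumes "a \<noteq> b" "0 < k" "enat k < M a b"
  obtains x where "word_act M (alt_R b a k) (root a) x < 0"
proof -
  let ?x = "if even (k - 1) then a else b"
  have k: "Suc (k - 1) = k" using assms(2) by simp
  have "word_act M (alt_R b a k) (root a) = word_act M (alt_R a b (k - 1)) (\<lambda>x. - root a x)"
    using alt_R_Suc_snoc[of b a "k - 1"] k by (simp add: refl_act_root)
  also have "\<dots> = (\<lambda>x. - word_act M (alt_R a b (k - 1)) (root a) x)"
    by (simp add: word_act_uminus)
  finally have "word_act M (alt_R b a k) (root a) ?x = - chebU (coxeter_cos M a b) k"
    unfolding word_act_alt_R_root[OF assms(1)] k using assms(1) by (simp add: root_def)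
  then show thesis
    using that[of ?x] chebU_pos[OF assms] by simp
qed

lemma word_act_alt_R_root_pos:
  assumes "a \<noteq> b" "0 < k" "enat (Suc k) < M a b"
  shows "0 < word_act M (alt_R a b k) (root a) a" "0 < word_act M (alt_R a b k) (root a) b"
proof -
  have "enat k < M a b"
    using assms(3) by (meson Suc_ile_eq order_less_imp_le)
  then have "0 < chebU (coxeter_cos M a b) (Suc k)" "0 < chebU (coxeter_cos M a b) k"
    using chebU_pos[OF assms(1)] assms(2,3) by simp_all
  then show "0 < word_act M (alt_R a b k) (root a) a" "0 < word_act M (alt_R a b k) (root a) b"
    unfolding word_act_alt_R_root[OF assms(1)] using assms(1) by (auto simp: root_def)
qed

lemma alternating_dihedral_split:
  assumes ab: "a \<noteq> b" and z: "set z \<subseteq> {a, b}" "alternating z" "z \<noteq> []"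
    and act: "word_act M z (root a) = (\<lambda>x. \<mu> * root c x)" and pos: "0 < \<mu>"
  obtains m z2 where "M a b = enat m" "cox_eq M z (z2 @ alt_R a b (m - 1))" "set z2 \<subseteq> {a, b}"
    "length z2 < length z"
proof -
  let ?k = "length z"
  have k: "0 < ?k" using z(3) by simp
  have "last z \<in> {a, b}" using z(1,3) last_in_set by blast
  then consider "z = alt_R b a ?k" | "z = alt_R a b ?k"
    using alternating_eq_alt_R[OF z(2) _ z(3)] z(1) by (metis insertE insert_commute singletonD)
  then obtain m where m: "M a b = enat m"
    and long: "z = alt_R b a ?k \<and> m \<le> ?k \<or> z = alt_R a b ?k \<and> m \<le> Suc ?k"
  proof cases
    case 1
    have "\<not> enat ?k < M a b"
    proof
      assume "enat ?k < M a b"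
      then obtain x where "word_act M z (root a) x < 0"
        using word_act_alt_R_root_neg[OF ab k] 1 by metis
      then show False using act pos by (simp add: root_def split: if_splits)
    qed
    then show thesis using that 1 by (cases "M a b") auto
  next
    case 2
    have "\<not> enat (Suc ?k) < M a b"
    proof
      assume "enat (Suc ?k) < M a b"
      then have "word_act M z (root a) a \<noteq> 0" "word_act M z (root a) b \<noteq> 0"
        using word_act_alt_R_root_pos[OF ab k] 2 by (metis less_irrefl)+
      then show False using act ab by (simp add: root_def split: if_splits)
    qed
    then show thesis using that 2 by (cases "M a b") auto
  qed
  then show thesis
    using alt_R_cox_eq_order_suffix[where M = M, OF ab m order_ge_2[OF ab m] long] that by blast
qed

lemma dihedral_conj_gen:
  assumes "a \<noteq> b" "set z \<subseteq> {a, b}" "word_act M z (root a) = (\<lambda>x. \<mu> * root c x)" "0 < \<mu>"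
  shows "\<mu> = 1 \<and> conj_gen M z a c"
  using assms
proof (induction "length z" arbitrary: z a b c \<mu> rule: less_induct)
  case less
  note ab = less.prems(1) and z = less.prems(2) and act = less.prems(3) and pos = less.prems(4)
  have reduce: "\<mu> = 1 \<and> conj_gen M z a c"
    if z2: "cox_eq M z (z2 @ alt_R a b (m - 1))" "set z2 \<subseteq> {a, b}" "length z2 < length z"
      and m: "M a b = enat m" for z2 m
  proof -
    let ?r = "if even m then a else b" and ?o = "if even m then b else a"
    have "word_act M z2 (root ?r) = (\<lambda>x. \<mu> * root c x)"
      using act word_act_cox_eq[OF z2(1), of "root a"] word_act_alt_R_order_root[OF ab m] by simp
    moreover have "set z2 \<subseteq> {?r, ?o}" "?r \<noteq> ?o" using z2(2) ab by auto
    ultimately have "\<mu> = 1 \<and> conj_gen M z2 ?r c"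
      using less.hyps[OF z2(3)] pos by blast
    then show ?thesis
      using conj_gen_trans[OF z2(1) conj_gen_alt_R[where M = M, OF ab m order_ge_2[OF ab m]]] by blast
  qed
  consider "\<not> alternating z" | "z = []" | "alternating z" "z \<noteq> []" by blast
  then show ?case
  proof cases
    case 1
    then obtain p x q where pxq: "z = p @ [x, x] @ q" by (rule not_alternating_split)
    then have cz: "cox_eq M z (p @ q)" using cox_cancel by simp
    have "word_act M (p @ q) (root a) = (\<lambda>x. \<mu> * root c x)"
      using act word_act_cox_eq[OF cz, of "root a"] by simp
    then have "\<mu> = 1 \<and> conj_gen M (p @ q) a c"
      using less.hyps[of "p @ q" a b] ab z pos pxq by simp
    then show ?thesis using conj_gen_cox_eq[OF cz] by blast
  next
    case 2
    then have "c = a" "\<mu> = 1"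
      using fun_cong[OF act, of a] fun_cong[OF act, of c] by (auto simp: root_def split: if_splits)
    then show ?thesis using 2 conj_gen_Nil by simp
  next
    case 3
    then show ?thesis
      using alternating_dihedral_split[OF ab z 3 act pos] reduce by metis
  qed
qed

end

section \<open>Elements mapping a simple root to a simple root\<close>

context coxeter
begin

lemma word_act_root_in_span:
  assumes "s \<noteq> r" "set y \<subseteq> {s, r}"
  obtains p q where "word_act M y (root s) = (\<lambda>x. p * root s x + q * root r x)"
  using assms(2)
proof (induction y arbitrary: thesis)
  case Nil
  show ?case using Nil(1)[of 1 0] by simp
next
  case (Cons x y)
  obtain p q where pq: "word_act M y (root s) = (\<lambda>x. p * root s x + q * root r x)"
    using Cons by auto
  have "x = r \<or> x = s" using Cons(3) by auto
  then show ?case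
  proof
    assume "x = r"
    then show ?thesis
      using Cons(2) pq by (simp add: refl_act_root_pair[OF assms(1)])
  next
    assume x: "x = s"
    have "refl_act M s (\<lambda>z. q * root r z + p * root s z)
        = (\<lambda>z. q * root r z + (2 * coxeter_cos M r s * q - p) * root s z)"
      by (rule refl_act_root_pair) (use assms(1) in simp)
    then show ?thesis
      using Cons(2)[of "2 * coxeter_cos M r s * q - p" q] pq x by (simp add: add.commute)
  qed
qed

text \<open>The images of \<open>\<alpha>\<^sub>s\<close> and \<open>\<alpha>\<^sub>r\<close> have nonnegative coefficients and are linearly independent.\<close>
lemma nonneg_images_root_single:
  assumes "s \<noteq> r" and nn: "nonneg_coeffs (word_act M x (root s))" "nonneg_coeffs (word_act M x (root r))"
    and pq: "0 < p" "0 < q"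
  shows "word_act M x (\<lambda>z. p * root s z + q * root r z) \<noteq> root t"
proof
  define X where "X = word_act M x (root s)"
  define Y where "Y = word_act M x (root r)"
  assume "word_act M x (\<lambda>z. p * root s z + q * root r z) = root t"
  then have img: "p * X z + q * Y z = root t z" for z
    unfolding X_def Y_def word_act_lin[OF fin_supp_root fin_supp_root] by (metis)
  have off_t: "X z = 0 \<and> Y z = 0" if "z \<noteq> t" for z
  proof -
    have "0 \<le> X z" "0 \<le> Y z" using nn unfolding X_def Y_def nonneg_coeffs_def by auto
    then have "0 \<le> p * X z" "0 \<le> q * Y z" using pq by simp_all
    moreover have "p * X z + q * Y z = 0" using img[of z] that by (simp add: root_def)
    ultimately have "p * X z = 0" "q * Y z = 0" by linarith+
    then show ?thesis using pq by simp
  qed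
  have "Y t \<noteq> 0"
  proof
    assume "Y t = 0"
    moreover have "word_act M x (\<lambda>z. 0 * root r z) = (\<lambda>z. 0)"
      using word_act_scale[OF fin_supp_root, of M x 0 r] by simp
    moreover have "Y z = 0" for z
      using off_t[of z] \<open>Y t = 0\<close> by (cases "z = t") auto
    ultimately have "word_act M x (root r) = word_act M x (\<lambda>z. 0 * root r z)"
      unfolding Y_def by auto
    then have "root r = (\<lambda>z. 0 * root r z)"
      by (rule word_act_inj[rotated 2]) (simp_all add: fin_supp_def[of "\<lambda>z. 0"])
    then show False
      by (metis mult_zero_left root_def zero_neq_one)
  qed
  have "Y t * X z = X t * Y z" for z
    using off_t[of z] by (cases "z = t") auto
  then have "word_act M x (\<lambda>z. Y t * root s z) = word_act M x (\<lambda>z. X t * root r z)"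
    unfolding word_act_scale[OF fin_supp_root] X_def Y_def by auto
  then have "(\<lambda>z. Y t * root s z) = (\<lambda>z. X t * root r z)"
    by (rule word_act_inj[rotated 2]) simp_all
  then show False
    using \<open>Y t \<noteq> 0\<close> assms(1) by (metis (mono_tags) mult_cancel_left1 mult_zero_right root_def)
qed

lemma root_image_coeffs_nonneg:
  assumes rs: "s \<noteq> r" and y: "word_act M y (root s) = (\<lambda>z. p * root s z + q * root r z)"
    and nn: "nonneg_coeffs (word_act M x (root s))" "nonneg_coeffs (word_act M x (root r))"
    and img: "word_act M x (\<lambda>z. p * root s z + q * root r z) = root t"
  shows "0 \<le> p" "0 \<le> q" "p \<noteq> 0 \<or> q \<noteq> 0"
proof -
  have coeff: "word_act M y (root s) s = p" "word_act M y (root s) r = q"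
    using y rs by (simp_all add: root_def)
  have at_t: "p * word_act M x (root s) t + q * word_act M x (root r) t = 1"
    using fun_cong[OF img[unfolded word_act_lin[OF fin_supp_root fin_supp_root]], of t]
    by (simp add: root_def)
  have "0 \<le> p \<and> 0 \<le> q"
  proof (cases "cox_length M y \<le> cox_length M (y @ [s])")
    case True
    then show ?thesis
      using root_nonneg coeff unfolding nonneg_coeffs_def by metis
  next
    case False
    then have "p \<le> 0" "q \<le> 0"
      using root_nonpos coeff unfolding nonneg_coeffs_def by (metis neg_0_le_iff_le not_le)+
    moreover have "0 \<le> word_act M x (root s) t" "0 \<le> word_act M x (root r) t"
      using nn unfolding nonneg_coeffs_def by auto
    ultimately have "p * word_act M x (root s) t + q * word_act M x (root r) t \<le> 0"
      by (simp add: add_nonpos_nonpos mult_nonpos_nonneg)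
    then show ?thesis using at_t by simp
  qed
  then show "0 \<le> p" "0 \<le> q" by simp_all
  show "p \<noteq> 0 \<or> q \<noteq> 0" using at_t by auto
qed

lemma parabolic_root_positive_multiple:
  assumes rs: "s \<noteq> r" and y: "set y \<subseteq> {s, r}"
    and nn: "nonneg_coeffs (word_act M x (root s))" "nonneg_coeffs (word_act M x (root r))"
    and img: "word_act M x (word_act M y (root s)) = root t"
  obtains c \<mu> where "c \<in> {s, r}" "0 < \<mu>" "word_act M y (root s) = (\<lambda>z. \<mu> * root c z)"
proof -
  obtain p q where pq: "word_act M y (root s) = (\<lambda>x. p * root s x + q * root r x)"
    using word_act_root_in_span[OF rs y] .
  note img' = img[unfolded pq]
  note coeffs = root_image_coeffs_nonneg[OF rs pq nn img']
  have "\<not> (0 < p \<and> 0 < q)"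
    using nonneg_images_root_single[OF rs nn] img' by blast
  show thesis
  proof (cases "q = 0")
    case True
    then show thesis
      using that[of s p] pq coeffs by fastforce
  next
    case False
    then show thesis
      using that[of r q] pq coeffs \<open>\<not> (0 < p \<and> 0 < q)\<close> by fastforce
  qed
qed

lemma root_conj_gen:
  "word_act M w (root s) = root t \<Longrightarrow> conj_gen M w s t"
proof (induction "cox_length M w" arbitrary: w s t rule: less_induct)
  case less
  show ?case
  proof (cases "cox_length M w = 0")
    case True
    then have w: "cox_eq M w []" using cox_length_eq_0 cox_sym by blast
    have "root s = root t"
      using less.prems word_act_cox_eq[OF w, of "root s"] by simp
    then have "s = t" by (metis root_def zero_neq_one)
    then show ?thesis using conj_gen_cox_eq[OF w conj_gen_Nil] by simp
  next
    case False
    then obtain w1 r where w1: "cox_eq M (w1 @ [r]) w" "Suc (length w1) = cox_length M w"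
      using reduced_word_snoc by blast
    have rs: "r \<noteq> s"
    proof
      assume "r = s"
      then have "nonneg_coeffs (\<lambda>x. - root t x)"
        using root_nonpos[OF cox_length_snoc_less[OF w1]] less.prems by simp
      then show False by (auto simp: nonneg_coeffs_def root_def dest: spec[of _ t])
    qed
    obtain x y where y: "set y \<subseteq> {s, r}" and xy: "cox_eq M (x @ y) w"
      and x: "cox_length M x < cox_length M w"
      and x_le: "\<And>q. q \<in> {s, r} \<Longrightarrow> cox_length M x \<le> cox_length M (x @ [q])"
      by (rule minimal_parabolic_factorization[OF w1, of "{s, r}"]) simp_all
    have img: "word_act M x (word_act M y (root s)) = root t"
      using less.prems word_act_cox_eq[OF xy, of "root s"] by simp
    have nn: "nonneg_coeffs (word_act M x (root s))" "nonneg_coeffs (word_act M x (root r))"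
      using root_nonneg x_le by simp_all
    obtain c \<mu> where c: "c \<in> {s, r}" "0 < \<mu>" "word_act M y (root s) = (\<lambda>z. \<mu> * root c z)"
      by (rule parabolic_root_positive_multiple[OF rs[symmetric] y nn img])
    have dih: "\<mu> = 1 \<and> conj_gen M y s c"
      using dihedral_conj_gen[OF rs[symmetric] y c(3,2)] .
    then have "conj_gen M x c t"
      using less.hyps[OF x] img c(3) by simp
    then show ?thesis
      using conj_gen_trans[OF cox_sym[OF xy]] dih by blast
  qed
qed

end

theorem lemma2p2:
  fixes M :: "'a::countable \<Rightarrow> 'a \<Rightarrow> enat" and u v :: "'a list" and s t :: 'a
  assumes "coxeter_matrix M"
    and "word_act M u (root s) = word_act M v (root t)"
  shows "va_eq M (wconj u (pos [Sig s])) (wconj v (pos [Sig t])) \<and>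
         va_eq M (wconj u (pos [Tau s, Sig s])) (wconj v (pos [Tau t, Sig t]))"
proof -
  interpret coxeter M by (rule coxeter.intro) (rule assms(1))
  have "word_act M (rev v @ u) (root s) = root t"
    using assms(2) word_act_rev[of "root t" v] by simp
  then have conj: "conj_gen M (rev v @ u) s t"
    by (rule root_conj_gen)
  have "va_eq M (wconj (rev v @ u) (pos [Sig s])) (pos [Sig t])"
    "va_eq M (wconj (rev v @ u) (pos [Tau s, Sig s])) (pos [Tau t, Sig t])"
    using conj conj_gen_Tau_Sig by (simp_all add: conj_gen_def)
  then show ?thesis
    using va_eq_trans[OF wconj_rev_append va_eq_wconj_cong[OF cox_refl]] by blast
qed

end
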